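(* The logarithmic partial negativity $\hat N_l(\rho)=\log_2[\hat N(\rho)+1]$ is not monogamous: for the state $|\widetilde\Omega\rangle^{ABC}=\lambda_0|0\rangle|00\rangle+\lambda_1|1\rangle|10\rangle+\lambda_2|2\rangle|11\rangle$ with $\lambda_0\ge\lambda_1\ge\lambda_2>0$, $\sum\lambda_i^2=1$, one has $\hat N_l(|\widetilde\Omega\rangle^{A|BC})=\hat N_l(\rho^{AB})=\log_2(1+\lambda_0\lambda_1)$ while $\hat N_l(\rho^{AC})=\log_2(1+\lambda_1\lambda_2)>0$.
   Context: $\hat N(\rho)$ is the operator norm of the negative part of the partial transpose $\rho^{T_A}$ (the absolute value of its most negative eigenvalue, or $0$ if $\rho^{T_A}\ge0$). For a tripartite state, $E(A|BC)$ is the measure across the cut $A$ versus $BC$; $\rho^{AB},\rho^{AC}$ are reduced states. A measure $E$ is monogamous if $E(A|BC)=E(AB)$ always implies $E(AC)=0$. *)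

theory Defs
  imports Complex_Main "Jordan_Normal_Form.Matrix" "Jordan_Normal_Form.Char_Poly"
begin

text \<open>A bipartite system
  of dimensions dA, dX uses the product basis index a * dX + x;
  a tripartite system of dimensions dA, dB, dC uses a * (dB * dC) + b * dC + c.\<close>

definition density_matrix :: "nat \<Rightarrow> complex mat \<Rightarrow> bool" where
  "density_matrix n \<rho> \<longleftrightarrow>
     \<rho> \<in> carrier_mat n n \<and>
     (\<forall>i<n. \<forall>j<n. \<rho> $$ (j, i) = cnj (\<rho> $$ (i, j))) \<and>
     (\<forall>v \<in> carrier_vec n. 0 \<le> Re (\<Sum>i<n. \<Sum>j<n. cnj (v $ i) * \<rho> $$ (i, j) * v $ j)) \<and>
     (\<Sum>i<n. \<rho> $$ (i, i)) = 1"

definition partial_transpose_A :: "nat \<Rightarrow> nat \<Rightarrow> complex mat \<Rightarrow> complex mat" where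
  "partial_transpose_A dA dX \<rho> =
     mat (dA * dX) (dA * dX)
       (\<lambda>(i, j). \<rho> $$ ((j div dX) * dX + i mod dX, (i div dX) * dX + j mod dX))"

text \<open>Operator norm of the negative part of a Hermitian matrix: absolute value of its
  most negative eigenvalue, or 0 if there is none.\<close>
definition neg_part_norm :: "complex mat \<Rightarrow> real" where
  "neg_part_norm M = Max ({0} \<union> {- x | x. eigenvalue M (complex_of_real x)})"

definition partial_negativity :: "nat \<Rightarrow> nat \<Rightarrow> complex mat \<Rightarrow> real" where
  "partial_negativity dA dX \<rho> = neg_part_norm (partial_transpose_A dA dX \<rho>)"

definition log_partial_negativity :: "nat \<Rightarrow> nat \<Rightarrow> complex mat \<Rightarrow> real" where
  "log_partial_negativity dA dX \<rho> = log 2 (partial_negativity dA dX \<rho> + 1)"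

definition reduce_AB :: "nat \<Rightarrow> nat \<Rightarrow> nat \<Rightarrow> complex mat \<Rightarrow> complex mat" where
  "reduce_AB dA dB dC \<rho> = mat (dA * dB) (dA * dB)
     (\<lambda>(i, j). \<Sum>c<dC. \<rho> $$ ((i div dB) * (dB * dC) + (i mod dB) * dC + c,
                                (j div dB) * (dB * dC) + (j mod dB) * dC + c))"

definition reduce_AC :: "nat \<Rightarrow> nat \<Rightarrow> nat \<Rightarrow> complex mat \<Rightarrow> complex mat" where
  "reduce_AC dA dB dC \<rho> = mat (dA * dC) (dA * dC)
     (\<lambda>(i, j). \<Sum>b<dB. \<rho> $$ ((i div dC) * (dB * dC) + b * dC + i mod dC,
                                (j div dC) * (dB * dC) + b * dC + j mod dC))"

definition monogamous :: "(nat \<Rightarrow> nat \<Rightarrow> complex mat \<Rightarrow> real) \<Rightarrow> bool" where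
  "monogamous E \<longleftrightarrow>
     (\<forall>dA dB dC \<rho>. density_matrix (dA * dB * dC) \<rho> \<longrightarrow>
        E dA (dB * dC) \<rho> = E dA dB (reduce_AB dA dB dC \<rho>) \<longrightarrow>
        E dA dC (reduce_AC dA dB dC \<rho>) = 0)"

definition pure_state :: "complex vec \<Rightarrow> complex mat" where
  "pure_state v = mat (dim_vec v) (dim_vec v) (\<lambda>(i, j). v $ i * cnj (v $ j))"

text \<open>The state l0|0>|00> + l1|1>|10> + l2|2>|11> with A a qutrit, B and C qubits:
  basis indices 0, 1*4+1*2+0 = 6, 2*4+1*2+1 = 11.\<close>
definition Omega_tilde :: "real \<Rightarrow> real \<Rightarrow> real \<Rightarrow> complex vec" where
  "Omega_tilde l0 l1 l2 = vec 12 (\<lambda>k. if k = 0 then complex_of_real l0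
                                     else if k = 6 then complex_of_real l1
                                     else if k = 11 then complex_of_real l2 else 0)"

end

theory Submission
  imports Defs
begin

text \<open>In the product basis the partial transpose of the projector onto
  \<open>\<lambda>\<^sub>0|000\<rangle> + \<lambda>\<^sub>1|110\<rangle> + \<lambda>\<^sub>2|211\<rangle>\<close>, and of its two reductions, is block diagonal:
  diagonal entries \<open>\<lambda>\<^sub>i\<^sup>2\<close> or \<open>0\<close>, and \<open>2\<times>2\<close> blocks with zero diagonal and
  off-diagonal entry \<open>\<lambda>\<^sub>i\<lambda>\<^sub>j\<close>, whose eigenvalues are \<open>\<plusminus>\<lambda>\<^sub>i\<lambda>\<^sub>j\<close>. The cut A|BC
  has blocks for all pairs \<open>i < j\<close>, the reduction to AB only the block for \<open>(0,1)\<close> and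
  the reduction to AC only the one for \<open>(1,2)\<close>. Hence the most negative eigenvalues are
  \<open>-\<lambda>\<^sub>0\<lambda>\<^sub>1\<close>, \<open>-\<lambda>\<^sub>0\<lambda>\<^sub>1\<close> and \<open>-\<lambda>\<^sub>1\<lambda>\<^sub>2\<close>: an eigenvector for a smaller eigenvalue must vanish
  on every block. The uniform choice \<open>\<lambda>\<^sub>i = 1/\<surd>3\<close> then violates monogamy.\<close>

lemma finite_eigenvalues:
  fixes A :: "'a :: field mat"
  assumes "A \<in> carrier_mat n n"
  shows "finite {k. eigenvalue A k}"
proof -
  have "char_poly A \<noteq> 0"
    using degree_monic_char_poly[OF assms] by auto
  then show ?thesis
    using poly_roots_finite eigenvalue_root_char_poly[OF assms] by simp
qed

lemma neg_part_norm_eqI: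
  assumes M: "M \<in> carrier_mat n n" and "0 \<le> d"
    and "eigenvalue M (complex_of_real (-d))"
    and below: "\<And>x v. x < -d \<Longrightarrow> v \<in> carrier_vec n \<Longrightarrow> M *\<^sub>v v = complex_of_real x \<cdot>\<^sub>v v \<Longrightarrow> v = 0\<^sub>v n"
  shows "neg_part_norm M = d"
proof -
  let ?N = "{- x | x. eigenvalue M (complex_of_real x)}"
  have "?N \<subseteq> (\<lambda>k. - Re k) ` {k. eigenvalue M k}" by force
  then have "finite ?N"
    using finite_eigenvalues[OF M] finite_subset by blast
  moreover have "y \<le> d" if "y \<in> ?N" for y
  proof (rule ccontr)
    assume "\<not> y \<le> d"
    moreover obtain x v where "y = - x" "v \<in> carrier_vec n" "v \<noteq> 0\<^sub>v n"
        "M *\<^sub>v v = complex_of_real x \<cdot>\<^sub>v v"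
      using \<open>y \<in> ?N\<close> M unfolding eigenvalue_def eigenvector_def by auto
    ultimately show False using below by force
  qed
  moreover have "d \<in> ?N" using assms(3) by (intro CollectI exI[of _ "-d"]) simp
  ultimately show ?thesis
    unfolding neg_part_norm_def using \<open>0 \<le> d\<close> by (intro Max_eqI) auto
qed

lemma density_matrix_pure_state:
  assumes "(\<Sum>i<dim_vec p. (cmod (p $ i))\<^sup>2) = 1"
  shows "density_matrix (dim_vec p) (pure_state p)"
proof -
  let ?n = "dim_vec p"
  have "0 \<le> Re (\<Sum>i<?n. \<Sum>j<?n. cnj (w $ i) * pure_state p $$ (i, j) * w $ j)" for w :: "complex vec"
  proof -
    define z where "z = (\<Sum>i<?n. cnj (w $ i) * p $ i)"
    have "(\<Sum>i<?n. \<Sum>j<?n. cnj (w $ i) * pure_state p $$ (i, j) * w $ j)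
        = (\<Sum>i<?n. \<Sum>j<?n. (cnj (w $ i) * p $ i) * (cnj (p $ j) * w $ j))"
      by (intro sum.cong refl) (simp add: pure_state_def mult.assoc mult.left_commute)
    also have "\<dots> = z * cnj z"
      unfolding z_def sum_product[symmetric] by (simp add: mult.commute)
    finally show ?thesis by (simp add: complex_mult_cnj)
  qed
  moreover have "(\<Sum>i<?n. pure_state p $$ (i, i)) = 1"
  proof -
    have "(\<Sum>i<?n. pure_state p $$ (i, i)) = of_real (\<Sum>i<?n. (cmod (p $ i))\<^sup>2)"
      unfolding of_real_sum by (intro sum.cong refl) (simp add: pure_state_def complex_mult_cnj cmod_power2)
    then show ?thesis using assms by simp
  qed
  ultimately show ?thesis
    unfolding density_matrix_def by (auto simp: pure_state_def)
qed

lemma zero_vecI: "v \<in> carrier_vec n \<Longrightarrow> (\<forall>i<n. v $ i = 0) \<Longrightarrow> v = 0\<^sub>v n"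
  by auto

lemma row_scalar_prod_eigenvector:
  "A *\<^sub>v v = k \<cdot>\<^sub>v v \<Longrightarrow> i < dim_row A \<Longrightarrow> i < dim_vec v \<Longrightarrow> row A i \<bullet> v = k * v $ i"
  by (metis index_mult_mat_vec index_smult_vec(1))

lemma eigenvalueI:
  "v \<in> carrier_vec (dim_row A) \<Longrightarrow> v \<noteq> 0\<^sub>v (dim_row A) \<Longrightarrow> A *\<^sub>v v = k \<cdot>\<^sub>v v \<Longrightarrow> eigenvalue A k"
  unfolding eigenvalue_def eigenvector_def by blast

lemma swap_block_eigen_zero:
  fixes a b :: complex and c x :: real
  assumes "of_real c * a = of_real x * b" "of_real c * b = of_real x * a" "\<bar>c\<bar> < \<bar>x\<bar>"
  shows "a = 0 \<and> b = 0"
proof -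
  have "of_real (x * x) * a = of_real (c * c) * a"
    using assms(1,2) by (metis mult.left_commute mult.assoc of_real_mult)
  moreover have "c * c < x * x"
    using assms(3) abs_mult_self_eq by (metis abs_ge_zero mult_strict_mono' abs_mult_less abs_mult)
  ultimately have "a = 0"
    by (metis less_irrefl mult_cancel_right of_real_eq_iff)
  with assms show ?thesis by auto
qed

lemma sum_upt_6: "sum g {0..<6::nat} = g 0 + g 1 + g 2 + g 3 + g 4 + g 5"
  by (simp add: eval_nat_numeral atLeast0LessThan lessThan_Suc add.commute add.left_commute)

lemma sum_upt_12:
  "sum g {0..<12::nat} = g 0 + g 1 + g 2 + g 3 + g 4 + g 5 + g 6 + g 7 + g 8 + g 9 + g 10 + g 11"
  by (simp add: eval_nat_numeral atLeast0LessThan lessThan_Suc add.commute add.left_commute)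

lemma sum_lessThan_2: "sum g {..<2::nat} = g 0 + g 1"
  by (simp add: eval_nat_numeral lessThan_Suc add.commute)

lemma all_less_6: "(\<forall>i<6::nat. P i) \<longleftrightarrow> P 0 \<and> P 1 \<and> P 2 \<and> P 3 \<and> P 4 \<and> P 5"
  by (simp add: eval_nat_numeral less_Suc_eq all_conj_distrib)

lemma all_less_12:
  "(\<forall>i<12::nat. P i) \<longleftrightarrow> P 0 \<and> P 1 \<and> P 2 \<and> P 3 \<and> P 4 \<and> P 5 \<and> P 6 \<and> P 7 \<and> P 8 \<and> P 9 \<and> P 10 \<and> P 11"
  by (simp add: eval_nat_numeral less_Suc_eq all_conj_distrib)

lemma pt_Omega_tilde_eigenvalue:
  "eigenvalue (partial_transpose_A 3 4 (pure_state (Omega_tilde l0 l1 l2))) (of_real (- (l0 * l1)))"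
proof (rule eigenvalueI)
  let ?M = "partial_transpose_A 3 4 (pure_state (Omega_tilde l0 l1 l2))"
  define v :: "complex vec" where "v = vec 12 (\<lambda>k. if k = 2 then -1 else if k = 4 then 1 else 0)"
  show "v \<in> carrier_vec (dim_row ?M)"
    by (simp add: v_def partial_transpose_A_def)
  show "v \<noteq> 0\<^sub>v (dim_row ?M)"
    by (auto simp: v_def partial_transpose_A_def dest!: arg_cong[where f = "\<lambda>w. w $ 4"])
  have "\<forall>i<12. (?M *\<^sub>v v) $ i = (of_real (- (l0 * l1)) \<cdot>\<^sub>v v) $ i"
    unfolding all_less_12 by (simp add: v_def scalar_prod_def sum_upt_12 partial_transpose_A_def
        pure_state_def Omega_tilde_def)
  then show "?M *\<^sub>v v = of_real (- (l0 * l1)) \<cdot>\<^sub>v v"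
    by (intro eq_vecI) (auto simp: v_def partial_transpose_A_def)
qed

lemma pt_Omega_tilde_eigenvector_below:
  assumes v: "v \<in> carrier_vec 12"
    and eig: "partial_transpose_A 3 4 (pure_state (Omega_tilde l0 l1 l2)) *\<^sub>v v = of_real x \<cdot>\<^sub>v v"
    and "l1 \<le> l0" "l2 \<le> l1" "0 \<le> l2" and x: "x < - (l0 * l1)"
  shows "v = 0\<^sub>v 12"
proof -
  have row: "row (partial_transpose_A 3 4 (pure_state (Omega_tilde l0 l1 l2))) i \<bullet> v = x * v $ i"
    if "i < 12" for i
    using row_scalar_prod_eigenvector[OF eig] that v by (simp add: partial_transpose_A_def)
  note entries = scalar_prod_def sum_upt_12 partial_transpose_A_def pure_state_def Omega_tilde_def
  have prods: "0 \<le> l1 * l2" "l1 * l2 \<le> l0 * l2" "l0 * l2 \<le> l0 * l1"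
    using assms(3-5) by (simp_all add: mult_left_mono mult_right_mono)
  then have blocks: "\<bar>l0 * l1\<bar> < \<bar>x\<bar>" "\<bar>l0 * l2\<bar> < \<bar>x\<bar>" "\<bar>l1 * l2\<bar> < \<bar>x\<bar>"
    using x by linarith+
  have "x < 0"
    using prods x by linarith
  moreover from this have "l0 * l0 \<noteq> x" "l1 * l1 \<noteq> x" "l2 * l2 \<noteq> x"
    using zero_le_square by (metis leD)+
  ultimately have "v $ 0 = 0" "v $ 6 = 0" "v $ 11 = 0" "v $ 1 = 0" "v $ 5 = 0" "v $ 9 = 0"
    using row[of 0] row[of 6] row[of 11] row[of 1] row[of 5] row[of 9] v by (simp_all add: entries flip: of_real_mult)
  moreover have "v $ 2 = 0 \<and> v $ 4 = 0"
    using row[of 2] row[of 4] v blocks(1) by (intro swap_block_eigen_zero) (simp_all add: entries ac_simps)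
  moreover have "v $ 3 = 0 \<and> v $ 8 = 0"
    using row[of 3] row[of 8] v blocks(2) by (intro swap_block_eigen_zero) (simp_all add: entries ac_simps)
  moreover have "v $ 7 = 0 \<and> v $ 10 = 0"
    using row[of 7] row[of 10] v blocks(3) by (intro swap_block_eigen_zero) (simp_all add: entries ac_simps)
  ultimately show ?thesis
    using v by (intro zero_vecI) (simp_all add: all_less_12)
qed

lemma pt_reduce_AB_Omega_tilde_eigenvalue:
  "eigenvalue (partial_transpose_A 3 2 (reduce_AB 3 2 2 (pure_state (Omega_tilde l0 l1 l2))))
     (of_real (- (l0 * l1)))"
proof (rule eigenvalueI)
  let ?M = "partial_transpose_A 3 2 (reduce_AB 3 2 2 (pure_state (Omega_tilde l0 l1 l2)))"
  define v :: "complex vec" where "v = vec 6 (\<lambda>k. if k = 2 then -1 else if k = 1 then 1 else 0)"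
  show "v \<in> carrier_vec (dim_row ?M)"
    by (simp add: v_def partial_transpose_A_def)
  show "v \<noteq> 0\<^sub>v (dim_row ?M)"
    by (auto simp: v_def partial_transpose_A_def dest!: arg_cong[where f = "\<lambda>w. w $ 1"])
  have "\<forall>i<6. (?M *\<^sub>v v) $ i = (of_real (- (l0 * l1)) \<cdot>\<^sub>v v) $ i"
    unfolding all_less_6 by (simp add: v_def scalar_prod_def sum_upt_6 sum_lessThan_2
        reduce_AB_def partial_transpose_A_def pure_state_def Omega_tilde_def)
  then show "?M *\<^sub>v v = of_real (- (l0 * l1)) \<cdot>\<^sub>v v"
    by (intro eq_vecI) (auto simp: v_def partial_transpose_A_def)
qed

lemma pt_reduce_AB_Omega_tilde_eigenvector_below:
  assumes v: "v \<in> carrier_vec 6"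
    and eig: "partial_transpose_A 3 2 (reduce_AB 3 2 2 (pure_state (Omega_tilde l0 l1 l2))) *\<^sub>v v
      = of_real x \<cdot>\<^sub>v v"
    and "0 \<le> l0 * l1" and x: "x < - (l0 * l1)"
  shows "v = 0\<^sub>v 6"
proof -
  have row: "row (partial_transpose_A 3 2 (reduce_AB 3 2 2 (pure_state (Omega_tilde l0 l1 l2)))) i
      \<bullet> v = x * v $ i" if "i < 6" for i
    using row_scalar_prod_eigenvector[OF eig] that v by (simp add: partial_transpose_A_def)
  note entries = scalar_prod_def sum_upt_6 sum_lessThan_2 reduce_AB_def partial_transpose_A_def
    pure_state_def Omega_tilde_def
  have "x < 0"
    using assms(3) x by linarith
  moreover from this have "l0 * l0 \<noteq> x" "l1 * l1 \<noteq> x" "l2 * l2 \<noteq> x"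
    using zero_le_square by (metis leD)+
  ultimately have "v $ 0 = 0" "v $ 3 = 0" "v $ 5 = 0" "v $ 4 = 0"
    using row[of 0] row[of 3] row[of 5] row[of 4] v by (simp_all add: entries flip: of_real_mult)
  moreover have "\<bar>l0 * l1\<bar> < \<bar>x\<bar>"
    using assms(3) x by linarith
  then have "v $ 1 = 0 \<and> v $ 2 = 0"
    using row[of 1] row[of 2] v by (intro swap_block_eigen_zero) (simp_all add: entries ac_simps)
  ultimately show ?thesis
    using v by (intro zero_vecI) (simp_all add: all_less_6)
qed

lemma pt_reduce_AC_Omega_tilde_eigenvalue:
  "eigenvalue (partial_transpose_A 3 2 (reduce_AC 3 2 2 (pure_state (Omega_tilde l0 l1 l2))))
     (of_real (- (l1 * l2)))"
proof (rule eigenvalueI)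
  let ?M = "partial_transpose_A 3 2 (reduce_AC 3 2 2 (pure_state (Omega_tilde l0 l1 l2)))"
  define v :: "complex vec" where "v = vec 6 (\<lambda>k. if k = 4 then -1 else if k = 3 then 1 else 0)"
  show "v \<in> carrier_vec (dim_row ?M)"
    by (simp add: v_def partial_transpose_A_def)
  show "v \<noteq> 0\<^sub>v (dim_row ?M)"
    by (auto simp: v_def partial_transpose_A_def dest!: arg_cong[where f = "\<lambda>w. w $ 3"])
  have "\<forall>i<6. (?M *\<^sub>v v) $ i = (of_real (- (l1 * l2)) \<cdot>\<^sub>v v) $ i"
    unfolding all_less_6 by (simp add: v_def scalar_prod_def sum_upt_6 sum_lessThan_2
        reduce_AC_def partial_transpose_A_def pure_state_def Omega_tilde_def)
  then show "?M *\<^sub>v v = of_real (- (l1 * l2)) \<cdot>\<^sub>v v"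
    by (intro eq_vecI) (auto simp: v_def partial_transpose_A_def)
qed

lemma pt_reduce_AC_Omega_tilde_eigenvector_below:
  assumes v: "v \<in> carrier_vec 6"
    and eig: "partial_transpose_A 3 2 (reduce_AC 3 2 2 (pure_state (Omega_tilde l0 l1 l2))) *\<^sub>v v
      = of_real x \<cdot>\<^sub>v v"
    and "0 \<le> l1 * l2" and x: "x < - (l1 * l2)"
  shows "v = 0\<^sub>v 6"
proof -
  have row: "row (partial_transpose_A 3 2 (reduce_AC 3 2 2 (pure_state (Omega_tilde l0 l1 l2)))) i
      \<bullet> v = x * v $ i" if "i < 6" for i
    using row_scalar_prod_eigenvector[OF eig] that v by (simp add: partial_transpose_A_def)
  note entries = scalar_prod_def sum_upt_6 sum_lessThan_2 reduce_AC_def partial_transpose_A_def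
    pure_state_def Omega_tilde_def
  have "x < 0"
    using assms(3) x by linarith
  moreover from this have "l0 * l0 \<noteq> x" "l1 * l1 \<noteq> x" "l2 * l2 \<noteq> x"
    using zero_le_square by (metis leD)+
  ultimately have "v $ 0 = 0" "v $ 2 = 0" "v $ 5 = 0" "v $ 1 = 0"
    using row[of 0] row[of 2] row[of 5] row[of 1] v by (simp_all add: entries flip: of_real_mult)
  moreover have "\<bar>l1 * l2\<bar> < \<bar>x\<bar>"
    using assms(3) x by linarith
  then have "v $ 3 = 0 \<and> v $ 4 = 0"
    using row[of 3] row[of 4] v by (intro swap_block_eigen_zero) (simp_all add: entries ac_simps)
  ultimately show ?thesis
    using v by (intro zero_vecI) (simp_all add: all_less_6)
qed

lemma partial_negativity_Omega_tilde:
  assumes "l1 \<le> l0" "l2 \<le> l1" "0 \<le> l2"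
  shows "partial_negativity 3 4 (pure_state (Omega_tilde l0 l1 l2)) = l0 * l1"
  unfolding partial_negativity_def
proof (rule neg_part_norm_eqI[OF _ _ pt_Omega_tilde_eigenvalue])
  show "partial_transpose_A 3 4 (pure_state (Omega_tilde l0 l1 l2)) \<in> carrier_mat 12 12"
    by (simp add: partial_transpose_A_def)
qed (use assms pt_Omega_tilde_eigenvector_below in auto)

lemma partial_negativity_reduce_AB_Omega_tilde:
  assumes "0 \<le> l0 * l1"
  shows "partial_negativity 3 2 (reduce_AB 3 2 2 (pure_state (Omega_tilde l0 l1 l2))) = l0 * l1"
  unfolding partial_negativity_def
proof (rule neg_part_norm_eqI[OF _ assms pt_reduce_AB_Omega_tilde_eigenvalue])
  show "partial_transpose_A 3 2 (reduce_AB 3 2 2 (pure_state (Omega_tilde l0 l1 l2)))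
      \<in> carrier_mat 6 6"
    by (simp add: partial_transpose_A_def)
qed (use assms pt_reduce_AB_Omega_tilde_eigenvector_below in auto)

lemma partial_negativity_reduce_AC_Omega_tilde:
  assumes "0 \<le> l1 * l2"
  shows "partial_negativity 3 2 (reduce_AC 3 2 2 (pure_state (Omega_tilde l0 l1 l2))) = l1 * l2"
  unfolding partial_negativity_def
proof (rule neg_part_norm_eqI[OF _ assms pt_reduce_AC_Omega_tilde_eigenvalue])
  show "partial_transpose_A 3 2 (reduce_AC 3 2 2 (pure_state (Omega_tilde l0 l1 l2)))
      \<in> carrier_mat 6 6"
    by (simp add: partial_transpose_A_def)
qed (use assms pt_reduce_AC_Omega_tilde_eigenvector_below in auto)

lemma density_matrix_Omega_tilde:
  assumes "l0\<^sup>2 + l1\<^sup>2 + l2\<^sup>2 = 1"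
  shows "density_matrix 12 (pure_state (Omega_tilde l0 l1 l2))"
proof -
  have "(\<Sum>i<12. (cmod (Omega_tilde l0 l1 l2 $ i))\<^sup>2) = l0\<^sup>2 + l1\<^sup>2 + l2\<^sup>2"
    by (simp add: atLeast0LessThan[symmetric] sum_upt_12 Omega_tilde_def)
  then show ?thesis
    using density_matrix_pure_state[of "Omega_tilde l0 l1 l2"] assms
    by (simp add: Omega_tilde_def)
qed

lemma log_partial_negativities_Omega_tilde:
  assumes "l1 \<le> l0" "l2 \<le> l1" "0 < l2"
  defines "\<rho> \<equiv> pure_state (Omega_tilde l0 l1 l2)"
  shows "log_partial_negativity 3 4 \<rho> = log 2 (1 + l0 * l1)"
    and "log_partial_negativity 3 2 (reduce_AB 3 2 2 \<rho>) = log 2 (1 + l0 * l1)"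
    and "log_partial_negativity 3 2 (reduce_AC 3 2 2 \<rho>) = log 2 (1 + l1 * l2)"
    and "log_partial_negativity 3 2 (reduce_AC 3 2 2 \<rho>) > 0"
proof -
  have "0 \<le> l0 * l1" "0 < l1 * l2"
    using assms(1-3) by simp_all
  then show "log_partial_negativity 3 4 \<rho> = log 2 (1 + l0 * l1)"
    and "log_partial_negativity 3 2 (reduce_AB 3 2 2 \<rho>) = log 2 (1 + l0 * l1)"
    and AC: "log_partial_negativity 3 2 (reduce_AC 3 2 2 \<rho>) = log 2 (1 + l1 * l2)"
    using assms(1-3)
    by (simp_all add: \<rho>_def log_partial_negativity_def partial_negativity_Omega_tilde
        partial_negativity_reduce_AB_Omega_tilde partial_negativity_reduce_AC_Omega_tilde add.commute)
  show "log_partial_negativity 3 2 (reduce_AC 3 2 2 \<rho>) > 0"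
    unfolding AC using \<open>0 < l1 * l2\<close> by simp
qed

lemma not_monogamous_log_partial_negativity: "\<not> monogamous log_partial_negativity"
proof
  assume "monogamous log_partial_negativity"
  define s :: real where "s = 1 / sqrt 3"
  have "0 < s" "s\<^sup>2 + s\<^sup>2 + s\<^sup>2 = 1"
    unfolding s_def by (simp_all add: power_divide)
  then have "density_matrix (3 * 2 * 2) (pure_state (Omega_tilde s s s))"
    and "log_partial_negativity 3 (2 * 2) (pure_state (Omega_tilde s s s))
      = log_partial_negativity 3 2 (reduce_AB 3 2 2 (pure_state (Omega_tilde s s s)))"
    and "log_partial_negativity 3 2 (reduce_AC 3 2 2 (pure_state (Omega_tilde s s s))) > 0"
    using density_matrix_Omega_tilde log_partial_negativities_Omega_tilde[of s s s] by simp_all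
  with \<open>monogamous log_partial_negativity\<close> show False
    unfolding monogamous_def by fastforce
qed

theorem mainTheorem5:
  shows "\<not> monogamous log_partial_negativity \<and>
    (\<forall>l0 l1 l2 :: real. l0 \<ge> l1 \<and> l1 \<ge> l2 \<and> l2 > 0 \<and> l0\<^sup>2 + l1\<^sup>2 + l2\<^sup>2 = 1 \<longrightarrow>
      (let \<rho> = pure_state (Omega_tilde l0 l1 l2) in
        log_partial_negativity 3 4 \<rho> = log 2 (1 + l0 * l1) \<and>
        log_partial_negativity 3 2 (reduce_AB 3 2 2 \<rho>) = log 2 (1 + l0 * l1) \<and>
        log_partial_negativity 3 2 (reduce_AC 3 2 2 \<rho>) = log 2 (1 + l1 * l2) \<and>
        log_partial_negativity 3 2 (reduce_AC 3 2 2 \<rho>) > 0))"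
  using not_monogamous_log_partial_negativity log_partial_negativities_Omega_tilde
  unfolding Let_def by blast

end
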